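(* Let $\mathbb{F}$ be a field and let $\mathcal{C}_2 \subsetneqq \mathcal{C}_1 \subseteq \mathbb{F}^{m \times n}$ be linear codes with $\ell = \dim(\mathcal{C}_1) - \dim(\mathcal{C}_2)$. Then for every $1 \leq r \leq \ell$, $$d_{M,r}(\mathcal{C}_1,\mathcal{C}_2) \leq n - \left\lceil \frac{\ell - r + 1}{m} \right\rceil + 1.$$ In particular, $\dim(\mathcal{C}_1) - \dim(\mathcal{C}_2) \leq \max\{m,n\}(\min\{m,n\} - d_R(\mathcal{C}_1,\mathcal{C}_2) + 1)$.
   Context: ${\rm Row}(C)$ is the row space of a matrix $C$ and ${\rm Rk}(C) = \dim {\rm Row}(C)$. For a subspace $\mathcal{L} \subseteq \mathbb{F}^n$, $\mathcal{V}_\mathcal{L} = \{V \in \mathbb{F}^{m\times n} \mid {\rm Row}(V) \subseteq \mathcal{L}\}$. For nested linear codes and $1 \le r \le \ell$, $d_{M,r}(\mathcal{C}_1,\mathcal{C}_2) = \min\{\dim \mathcal{L} \mid \mathcal{L} \subseteq \mathbb{F}^n \text{ subspace}, \dim(\mathcal{C}_1 \cap \mathcal{V}_\mathcal{L}) - \dim(\mathcal{C}_2 \cap \mathcal{V}_\mathcal{L}) \geq r\}$, and $d_R(\mathcal{C}_1,\mathcal{C}_2) = \min\{{\rm Rk}(C) \mid C \in \mathcal{C}_1 \setminus \mathcal{C}_2\}$. *)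

theory Defs
  imports "HOL-Analysis.Analysis"
begin

text \<open>Matrices in F^(m x n) are modelled as 'a^'n^'m (m = CARD('m) rows, n = CARD('n)
columns) over an arbitrary field 'a. The F-vector space structure on matrices is
entrywise scaling.\<close>

definition mscale :: "'a::field \<Rightarrow> 'a^'n^'m \<Rightarrow> 'a^'n^'m" where
  "mscale c A = (\<chi> i. c *s (A $ i))"

interpretation mat: vector_space "mscale :: 'a::field \<Rightarrow> 'a^'n^'m \<Rightarrow> 'a^'n^'m"
  by unfold_locales (auto simp: mscale_def vec_eq_iff algebra_simps)

definition Row :: "'a::field^'n^'m \<Rightarrow> ('a^'n) set" where
  "Row C = vec.span (range (\<lambda>i. C $ i))"

definition Rk :: "'a::field^'n^'m \<Rightarrow> nat" where
  "Rk C = vec.dim (Row C)"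

definition VL :: "('a::field^'n) set \<Rightarrow> ('a^'n^'m) set" where
  "VL L = {V. Row V \<subseteq> L}"

definition dMr :: "nat \<Rightarrow> ('a::field^'n^'m) set \<Rightarrow> ('a^'n^'m) set \<Rightarrow> nat" where
  "dMr r C1 C2 = (LEAST d. \<exists>L :: ('a^'n) set. vec.subspace L \<and> vec.dim L = d \<and>
      int (mat.dim (C1 \<inter> VL L)) - int (mat.dim (C2 \<inter> VL L)) \<ge> int r)"

definition dR :: "('a::field^'n^'m) set \<Rightarrow> ('a^'n^'m) set \<Rightarrow> nat" where
  "dR C1 C2 = (LEAST d. \<exists>C \<in> C1 - C2. Rk C = d)"

end

theory Submission
  imports Defs
begin

text \<open>
A code \<open>C\<^sub>1\<close> loses at most \<open>mn - dim K\<close> dimensions when intersected with a subspace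
\<open>K\<close> of \<open>F\<^sup>m\<^sup>\<times>\<^sup>n\<close>, and the same holds relative to \<open>C\<^sub>2\<close>, since
\<open>dim (C \<inter> K) = dim C + dim K - dim (C + K)\<close> and \<open>K \<subseteq> C\<^sub>2 + K\<close>.
For the first bound take \<open>K = V\<^sub>L\<close> with \<open>L\<close> a coordinate subspace of dimension
\<open>n - \<lfloor>(\<ell> - r)/m\<rfloor>\<close>: then \<open>dim K = m dim L\<close> is large enough to keep a relative dimension
of at least \<open>r\<close>. For the second bound take \<open>K\<close> to be the matrices supported on
\<open>d\<^sub>R - 1\<close> columns (if \<open>n \<le> m\<close>) or rows (if \<open>m < n\<close>): every matrix of \<open>K\<close> has rank below
\<open>d\<^sub>R\<close>, so \<open>C\<^sub>1 \<inter> K = C\<^sub>2 \<inter> K\<close>, and \<open>dim K = max m n (d\<^sub>R - 1)\<close>.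
\<close>

definition matrix_of :: "'a::field^('m\<times>'n) \<Rightarrow> 'a^'n^'m" where
  "matrix_of v = (\<chi> i j. v $ (i,j))"

lemma linear_matrix_of: "Vector_Spaces.linear (*s) (mscale :: 'a::field \<Rightarrow> 'a^'n^'m \<Rightarrow> _) matrix_of"
  by unfold_locales (auto simp: matrix_of_def mscale_def vec_eq_iff algebra_simps)

lemma inj_matrix_of: "inj matrix_of"
  by (auto simp: inj_on_def matrix_of_def vec_eq_iff)

lemma surj_matrix_of: "surj matrix_of"
proof (rule surjI)
  fix A :: "'a::field^'n^'m"
  show "matrix_of (\<chi> p. A $ fst p $ snd p) = A"
    by (simp add: matrix_of_def vec_eq_iff)
qed

lemma matrix_of_axis:
  "matrix_of (axis (i,j) (1::'a::field)) $ a $ b = (if a = i \<and> b = j then 1 else 0)"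
  by (auto simp: matrix_of_def axis_def)

interpretation matrix_of: Vector_Spaces.linear "(*s)" "mscale :: 'a::field \<Rightarrow> 'a^'n^'m \<Rightarrow> _" matrix_of
  by (rule linear_matrix_of)

interpretation matrix_space: finite_dimensional_vector_space "mscale :: 'a::field \<Rightarrow> 'a^'n^'m \<Rightarrow> _"
  "matrix_of ` cart_basis"
proof
  show "finite (matrix_of ` cart_basis)" by (simp add: finite_cart_basis)
  show "mat.independent (matrix_of ` cart_basis)"
    using matrix_of.independent_injective_image[OF vec.independent_Basis] inj_matrix_of
    by (meson inj_on_subset subset_UNIV)
  show "mat.span (matrix_of ` cart_basis) = UNIV"
    using matrix_of.span_image[of cart_basis] vec.span_Basis surj_matrix_of by metis
qed

lemma mat_dim_UNIV: "mat.dim (UNIV :: ('a::field^'n^'m) set) = CARD('m) * CARD('n)"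
proof -
  have "mat.dim (UNIV :: ('a::field^'n^'m) set) = card (matrix_of ` (cart_basis :: ('a^('m\<times>'n)) set))"
    by (rule matrix_space.dim_UNIV)
  also have "\<dots> = card (cart_basis :: ('a^('m\<times>'n)) set)"
    by (rule card_image) (meson inj_matrix_of inj_on_subset subset_UNIV)
  finally show ?thesis by (simp add: card_cart_basis)
qed

lemma mat_dim_le: "mat.dim (X :: ('a::field^'n^'m) set) \<le> CARD('m) * CARD('n)"
  by (metis mat_dim_UNIV matrix_space.dim_subset subset_UNIV)

lemma card_unit_matrices:
  "card ((\<lambda>p. matrix_of (axis p (1::'a::field))) ` (A \<times> B)) = card (A :: 'm::finite set) * card (B :: 'n::finite set)"
proof -
  have "inj_on (\<lambda>p. matrix_of (axis p (1::'a))) (A \<times> B)"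
    by (auto simp: inj_on_def inj_eq[OF inj_matrix_of] axis_eq_axis)
  then show ?thesis by (simp add: card_image card_cartesian_product)
qed

lemma card_le_dim_of_unit_matrices:
  assumes "(\<lambda>p. matrix_of (axis p (1::'a::field))) ` (A \<times> B) \<subseteq> (K :: ('a^'n^'m) set)"
  shows "card A * card B \<le> mat.dim K"
proof -
  have "mat.independent ((\<lambda>p. matrix_of (axis p (1::'a))) ` (A \<times> B))"
    by (rule mat.independent_mono[OF matrix_space.independent_Basis]) (auto simp: cart_basis_def)
  then show ?thesis
    using matrix_space.independent_card_le_dim[OF assms] card_unit_matrices by metis
qed

context finite_dimensional_vector_space
begin

lemma dim_Int_diff_ge:
  assumes "subspace C1" "subspace C2" "subspace K" "C2 \<subseteq> C1"
  shows "int (dim (C1 \<inter> K)) - int (dim (C2 \<inter> K)) \<ge>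
         int (dim C1) - int (dim C2) - int (dim (UNIV :: 'b set)) + int (dim K)"
proof -
  have sum1: "dim {x + y |x y. x \<in> C1 \<and> y \<in> K} + dim (C1 \<inter> K) = dim C1 + dim K"
    by (rule dim_sums_Int) (use assms in auto)
  have sum2: "dim {x + y |x y. x \<in> C2 \<and> y \<in> K} + dim (C2 \<inter> K) = dim C2 + dim K"
    by (rule dim_sums_Int) (use assms in auto)
  have "dim {x + y |x y. x \<in> C1 \<and> y \<in> K} \<le> dim (UNIV :: 'b set)"
    by (rule dim_subset) simp
  moreover have "K \<subseteq> {x + y |x y. x \<in> C2 \<and> y \<in> K}"
    using subspace_0[OF assms(2)] by force
  then have "dim K \<le> dim {x + y |x y. x \<in> C2 \<and> y \<in> K}"
    by (rule dim_subset)
  ultimately show ?thesis using sum1 sum2 by linarith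
qed

end

definition coord_subspace :: "'n set \<Rightarrow> ('a::field^'n) set" where
  "coord_subspace S = {x. \<forall>j. j \<notin> S \<longrightarrow> x $ j = 0}"

lemma subspace_coord_subspace: "vec.subspace (coord_subspace S)"
  by (auto simp: vec.subspace_def coord_subspace_def)

lemma dim_coord_subspace_le: "vec.dim (coord_subspace S :: ('a::field^'n) set) \<le> card S"
proof -
  have "x \<in> vec.span ((\<lambda>j. axis j (1::'a)) ` S)" if x: "x \<in> coord_subspace S" for x :: "'a^'n"
  proof -
    have "(\<Sum>j\<in>S. x $ j *s axis j (1::'a)) $ k = (if k \<in> S then x $ k else 0)" for k
      by (simp add: sum_component axis_def if_distrib cong: if_cong)
    then have "x = (\<Sum>j\<in>S. x $ j *s axis j 1)"
      using x by (simp add: vec_eq_iff coord_subspace_def)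
    also have "\<dots> \<in> vec.span ((\<lambda>j. axis j (1::'a)) ` S)"
      by (intro vec.span_sum vec.span_scale vec.span_base) auto
    finally show ?thesis .
  qed
  then have "vec.dim (coord_subspace S :: ('a^'n) set) \<le> card ((\<lambda>j. axis j (1::'a)) ` S)"
    by (intro vec.dim_le_card) auto
  also have "\<dots> \<le> card S" by (rule card_image_le) simp
  finally show ?thesis .
qed

lemma VL_coord_subspace:
  "VL (coord_subspace S) = {V :: 'a::field^'n^'m. \<forall>i j. j \<notin> S \<longrightarrow> V $ i $ j = 0}"
proof -
  have "Row V \<subseteq> coord_subspace S \<longleftrightarrow> range (\<lambda>i. V $ i) \<subseteq> coord_subspace S" for V :: "'a^'n^'m"
    unfolding Row_def
    by (metis subset_trans vec.span_superset vec.span_minimal subspace_coord_subspace)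
  then show ?thesis by (auto simp: VL_def coord_subspace_def image_subset_iff)
qed

lemma subspace_VL_coord_subspace: "mat.subspace (VL (coord_subspace S) :: ('a::field^'n^'m) set)"
  unfolding VL_coord_subspace by (auto simp: mat.subspace_def mscale_def)

lemma dim_VL_coord_subspace_ge:
  "CARD('m) * card S \<le> mat.dim (VL (coord_subspace S) :: ('a::field^'n^'m) set)"
proof -
  have "(\<lambda>p. matrix_of (axis p (1::'a))) ` (UNIV \<times> S) \<subseteq> (VL (coord_subspace S) :: ('a^'n^'m) set)"
    by (auto simp: VL_coord_subspace matrix_of_axis)
  then show ?thesis by (rule card_le_dim_of_unit_matrices)
qed

definition row_supported :: "'m set \<Rightarrow> ('a::field^'n^'m) set" where
  "row_supported T = {V. \<forall>i. i \<notin> T \<longrightarrow> V $ i = 0}"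

lemma subspace_row_supported: "mat.subspace (row_supported T)"
  by (auto simp: mat.subspace_def mscale_def row_supported_def)

lemma dim_row_supported_ge:
  "CARD('n) * card T \<le> mat.dim (row_supported T :: ('a::field^'n^'m) set)"
proof -
  have "(\<lambda>p. matrix_of (axis p (1::'a))) ` (T \<times> UNIV) \<subseteq> (row_supported T :: ('a^'n^'m) set)"
    by (auto simp: row_supported_def vec_eq_iff matrix_of_axis)
  then show ?thesis by (subst mult.commute) (rule card_le_dim_of_unit_matrices)
qed

lemma Rk_row_supported_le:
  assumes "V \<in> row_supported T"
  shows "Rk V \<le> card T"
proof -
  have "V $ i \<in> vec.span ((\<lambda>i. V $ i) ` T)" for i
    using assms by (cases "i \<in> T") (auto simp: row_supported_def vec.span_zero intro: vec.span_base)
  then have "range (\<lambda>i. V $ i) \<subseteq> vec.span ((\<lambda>i. V $ i) ` T)"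
    by blast
  then have "vec.dim (range (\<lambda>i. V $ i)) \<le> card ((\<lambda>i. V $ i) ` T)"
    by (intro vec.dim_le_card) auto
  also have "\<dots> \<le> card T" by (rule card_image_le) simp
  finally show ?thesis by (simp add: Rk_def Row_def)
qed

lemma Rk_VL_le: "V \<in> VL L \<Longrightarrow> Rk V \<le> vec.dim L"
  by (simp add: Rk_def VL_def vec.dim_subset)

lemma Rk_le_nrows: "Rk (V :: 'a::field^'n^'m) \<le> CARD('m)"
  using Rk_row_supported_le[of V UNIV] by (simp add: row_supported_def)

lemma Rk_le_ncols: "Rk (V :: 'a::field^'n^'m) \<le> CARD('n)"
  by (simp add: Rk_def dim_subset_UNIV_cart_gen)

lemma Rk_eq_0_iff: "Rk V = 0 \<longleftrightarrow> V = 0"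
  by (auto simp: Rk_def Row_def vec_eq_iff image_subset_iff)

lemma low_rank_subspace_exists:
  assumes "k \<le> min CARD('m) CARD('n)"
  obtains K :: "('a::field^'n^'m) set"
  where "mat.subspace K" "max CARD('m) CARD('n) * k \<le> mat.dim K" "\<And>V. V \<in> K \<Longrightarrow> Rk V \<le> k"
proof (cases "CARD('n) \<le> CARD('m)")
  case True
  obtain S :: "'n set" where "card S = k"
    using assms obtain_subset_with_card_n[of k "UNIV :: 'n set"] by auto
  show ?thesis
  proof (rule that)
    show "mat.subspace (VL (coord_subspace S) :: ('a^'n^'m) set)"
      by (rule subspace_VL_coord_subspace)
    show "max CARD('m) CARD('n) * k \<le> mat.dim (VL (coord_subspace S) :: ('a^'n^'m) set)"
      using dim_VL_coord_subspace_ge[of S] True \<open>card S = k\<close> by (simp add: max_absorb1)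
    show "Rk V \<le> k" if "V \<in> VL (coord_subspace S)" for V :: "'a^'n^'m"
      using Rk_VL_le[OF that] dim_coord_subspace_le[of S, where 'a='a] \<open>card S = k\<close> by linarith
  qed
next
  case False
  obtain T :: "'m set" where "card T = k"
    using assms obtain_subset_with_card_n[of k "UNIV :: 'm set"] by auto
  show ?thesis
  proof (rule that)
    show "mat.subspace (row_supported T :: ('a^'n^'m) set)"
      by (rule subspace_row_supported)
    show "max CARD('m) CARD('n) * k \<le> mat.dim (row_supported T :: ('a^'n^'m) set)"
      using dim_row_supported_ge[of T] False \<open>card T = k\<close> by (simp add: max_absorb2)
    show "Rk V \<le> k" if "V \<in> row_supported T" for V :: "'a^'n^'m"
      using Rk_row_supported_le[OF that] \<open>card T = k\<close> by simp
  qed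
qed

lemma ceiling_Suc_divide:
  assumes "m > 0"
  shows "\<lceil>real (Suc a) / real m\<rceil> = int (a div m) + 1"
proof -
  have "a div m * m \<le> a"
    by (rule div_times_less_eq_dividend)
  then have "real (a div m) * real m \<le> real a"
    by (metis of_nat_le_iff of_nat_mult)
  have "a + 1 \<le> a div m * m + m"
    using assms div_mult_mod_eq[of a m] mod_less_divisor[of m a] by linarith
  then have "a + 1 \<le> (a div m + 1) * m"
    by (simp add: algebra_simps)
  then have "real a + 1 \<le> (real (a div m) + 1) * real m"
    by (metis of_nat_1 of_nat_add of_nat_le_iff of_nat_mult)
  with \<open>real (a div m) * real m \<le> real a\<close> assms show ?thesis
    by (simp add: ceiling_eq_iff pos_less_divide_eq pos_divide_le_eq)
qed

lemma relative_dim_Int_ge: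
  fixes C1 C2 K :: "('a::field^'n^'m) set"
  assumes "mat.subspace C1" "mat.subspace C2" "mat.subspace K" "C2 \<subseteq> C1"
  shows "int (mat.dim (C1 \<inter> K)) - int (mat.dim (C2 \<inter> K)) \<ge>
         int (mat.dim C1) - int (mat.dim C2) - int CARD('m) * int CARD('n) + int (mat.dim K)"
  using matrix_space.dim_Int_diff_ge[OF assms, unfolded mat_dim_UNIV of_nat_mult] .

lemma dMr_le:
  fixes C1 C2 :: "('a::field^'n^'m) set"
  assumes "mat.subspace C1" "mat.subspace C2" "C2 \<subseteq> C1"
    and l: "l = mat.dim C1 - mat.dim C2" and r: "1 \<le> r" "r \<le> l"
  shows "int (dMr r C1 C2) \<le> int CARD('n) - \<lceil>real (l - r + 1) / real CARD('m)\<rceil> + 1"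
proof -
  let ?m = "CARD('m)" and ?n = "CARD('n)"
  define q where "q = (l - r) div ?m"
  have "l - r < ?n * ?m"
    using l r mat_dim_le[of C1] by (simp add: mult.commute)
  then have "q < ?n"
    by (simp add: q_def less_mult_imp_div_less)
  obtain S :: "'n set" where S: "card S = ?n - q"
    using obtain_subset_with_card_n[of "?n - q" "UNIV :: 'n set"] by auto
  let ?K = "VL (coord_subspace S) :: ('a^'n^'m) set"
  have "q * ?m \<le> l - r"
    unfolding q_def by (rule div_times_less_eq_dividend)
  then have "int (q * ?m) \<le> int (l - r)"
    by (simp only: of_nat_le_iff)
  then have "int ?m * int q \<le> int l - int r"
    using r by (simp add: of_nat_diff mult.commute)
  moreover have "int ?m * int ?n - int ?m * int q \<le> int (mat.dim ?K)"
  proof -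
    have "int (?m * card S) \<le> int (mat.dim ?K)"
      using dim_VL_coord_subspace_ge[of S, where 'a='a and 'm='m] by (simp only: of_nat_le_iff)
    then show ?thesis
      using S \<open>q < ?n\<close> by (simp add: of_nat_diff right_diff_distrib)
  qed
  moreover have "int l = int (mat.dim C1) - int (mat.dim C2)"
    using l matrix_space.dim_subset[OF assms(3)] by simp
  ultimately have "int r \<le> int (mat.dim (C1 \<inter> ?K)) - int (mat.dim (C2 \<inter> ?K))"
    using relative_dim_Int_ge[OF assms(1-2) subspace_VL_coord_subspace[of S] assms(3)]
    by linarith
  then have "dMr r C1 C2 \<le> vec.dim (coord_subspace S :: ('a^'n) set)"
    unfolding dMr_def by (intro Least_le) (use subspace_coord_subspace in blast)
  also have "\<dots> \<le> ?n - q"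
    using dim_coord_subspace_le S by metis
  finally show ?thesis
    using ceiling_Suc_divide[of ?m "l - r"] \<open>q < ?n\<close> by (simp add: q_def)
qed

lemma dR_ge_1:
  assumes "mat.subspace C2" "C2 \<subset> C1"
  shows "1 \<le> dR C1 C2"
proof -
  have "\<exists>C \<in> C1 - C2. Rk C = dR C1 C2"
    unfolding dR_def by (rule LeastI_ex) (use assms(2) in blast)
  then obtain C where C: "C \<in> C1 - C2" "Rk C = dR C1 C2"
    by blast
  have "C \<noteq> 0"
    using C(1) mat.subspace_0[OF assms(1)] by blast
  then show ?thesis
    using C(2) Rk_eq_0_iff[of C] by simp
qed

lemma dim_diff_le_dR_bound:
  fixes C1 C2 :: "('a::field^'n^'m) set"
  assumes "mat.subspace C1" "mat.subspace C2" "C2 \<subset> C1"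
  shows "int (mat.dim C1 - mat.dim C2) \<le>
         int (max CARD('m) CARD('n)) * (int (min CARD('m) CARD('n)) - int (dR C1 C2) + 1)"
proof -
  let ?m = "CARD('m)" and ?n = "CARD('n)" and ?d = "dR C1 C2"
  have rank_ge: "?d \<le> Rk C" if "C \<in> C1 - C2" for C
    unfolding dR_def by (rule Least_le) (use that in blast)
  obtain C where "C \<in> C1 - C2"
    using assms(3) by blast
  then have "?d \<le> min ?m ?n"
    using rank_ge[of C] Rk_le_nrows[of C] Rk_le_ncols[of C] by simp
  then have "?d - 1 \<le> min ?m ?n"
    by (rule le_trans[OF diff_le_self])
  then obtain K :: "('a^'n^'m) set" where K: "mat.subspace K" "max ?m ?n * (?d - 1) \<le> mat.dim K"
    and low_rank: "\<And>V. V \<in> K \<Longrightarrow> Rk V \<le> ?d - 1"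
    by (rule low_rank_subspace_exists[where 'a='a]) blast
  have "C1 \<inter> K \<subseteq> C2"
  proof
    fix A assume A: "A \<in> C1 \<inter> K"
    show "A \<in> C2"
    proof (rule ccontr)
      assume "A \<notin> C2"
      then have "?d \<le> Rk A"
        using A rank_ge by blast
      moreover have "Rk A \<le> ?d - 1"
        using A low_rank by blast
      ultimately show False
        using dR_ge_1[OF assms(2-3)] by linarith
    qed
  qed
  then have "C1 \<inter> K = C2 \<inter> K"
    using assms(3) by blast
  then have "int (mat.dim C1) - int (mat.dim C2) \<le> int ?m * int ?n - int (mat.dim K)"
    using relative_dim_Int_ge[OF assms(1-2) K(1) psubset_imp_subset[OF assms(3)]] by simp
  moreover have "int ?m * int ?n = int (max ?m ?n) * int (min ?m ?n)"
    by (simp add: max_def min_def)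
  moreover have "int (max ?m ?n) * int ?d - int (max ?m ?n) \<le> int (mat.dim K)"
  proof -
    have "int (max ?m ?n * (?d - 1)) \<le> int (mat.dim K)"
      using K(2) by (simp only: of_nat_le_iff)
    then show ?thesis
      using dR_ge_1[OF assms(2-3)] by (simp add: of_nat_diff right_diff_distrib)
  qed
  moreover have "mat.dim C2 \<le> mat.dim C1"
    using assms(3) by (intro matrix_space.dim_subset) blast
  ultimately show ?thesis
    by (simp add: of_nat_diff algebra_simps)
qed

theorem theorem5:
  fixes C1 C2 :: "('a::field^'n^'m) set" and l :: nat
  assumes "mat.subspace C1" and "mat.subspace C2" and "C2 \<subset> C1"
    and "l = mat.dim C1 - mat.dim C2"
  shows "(\<forall>r. 1 \<le> r \<and> r \<le> l \<longrightarrow>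
            int (dMr r C1 C2) \<le> int CARD('n) - \<lceil>real (l - r + 1) / real CARD('m)\<rceil> + 1)
       \<and> int l \<le> int (max CARD('m) CARD('n)) *
            (int (min CARD('m) CARD('n)) - int (dR C1 C2) + 1)"
  using dMr_le[OF assms(1,2) psubset_imp_subset[OF assms(3)] assms(4)]
    dim_diff_le_dR_bound[OF assms(1-3)] assms(4) by blast

end
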